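(* For every pure three-qubit state $|\phi_{ABC}\rangle$, $$S^{\max}_{total}(|\phi_{ABC}\rangle)+3\,E_W(|\phi_{ABC}\rangle)\le\frac{10}{3},$$ where $S^{\max}_{total}=\max\{S_{AB}+S_{AC},\,S_{AB}+S_{BC},\,S_{AC}+S_{BC}\}$ and $E_W=\min\{\mathcal C_{AB}^2,\mathcal C_{AC}^2,\mathcal C_{BC}^2\}$.
   Context: For a two-qubit state $\rho$ let $t_{kl}=\mathrm{Tr}[\rho\,\sigma_k\otimes\sigma_l]$ ($\sigma_k$ Pauli matrices) and $S(\rho)=\sum_{k,l=1}^3 t_{kl}^2$; $\rho_{ij}$ are the two-qubit reduced states of $|\phi_{ABC}\rangle$ and $S_{ij}=S(\rho_{ij})$. $\mathcal C_{ij}$ is the Wootters concurrence of $\rho_{ij}$: $\mathcal C(\rho)=\max\{0,\lambda_1-\lambda_2-\lambda_3-\lambda_4\}$, with $\lambda_1\ge\dots\ge\lambda_4$ the square roots of the eigenvalues of $\rho(\sigma_2\otimes\sigma_2)\rho^*(\sigma_2\otimes\sigma_2)$. *)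

theory Defs
  imports "Jordan_Normal_Form.Char_Poly" "HOL-Library.Multiset"
begin

text \<open>Three-qubit pure states are unit vectors in C^8, basis index 4*a + 2*b + c
  for qubit values a (A), b (B), c (C). Two-qubit states are 4x4 complex matrices
  with basis index 2*x + y (first listed qubit is x).\<close>

definition is_pure_3qubit :: "complex vec \<Rightarrow> bool" where
  "is_pure_3qubit psi \<longleftrightarrow> dim_vec psi = 8 \<and> (\<Sum>i<8. (cmod (psi $ i))^2) = 1"

definition density :: "complex vec \<Rightarrow> complex mat" where
  "density psi = mat (dim_vec psi) (dim_vec psi) (\<lambda>(i,j). psi $ i * cnj (psi $ j))"

definition ptrace_C :: "complex mat \<Rightarrow> complex mat" where
  "ptrace_C R = mat 4 4 (\<lambda>(i,j). \<Sum>c<2. R $$ (4*(i div 2) + 2*(i mod 2) + c, 4*(j div 2) + 2*(j mod 2) + c))"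

definition ptrace_B :: "complex mat \<Rightarrow> complex mat" where
  "ptrace_B R = mat 4 4 (\<lambda>(i,j). \<Sum>b<2. R $$ (4*(i div 2) + 2*b + i mod 2, 4*(j div 2) + 2*b + j mod 2))"

definition ptrace_A :: "complex mat \<Rightarrow> complex mat" where
  "ptrace_A R = mat 4 4 (\<lambda>(i,j). \<Sum>a<2. R $$ (4*a + i, 4*a + j))"

definition rhoAB :: "complex vec \<Rightarrow> complex mat" where "rhoAB psi = ptrace_C (density psi)"
definition rhoAC :: "complex vec \<Rightarrow> complex mat" where "rhoAC psi = ptrace_B (density psi)"
definition rhoBC :: "complex vec \<Rightarrow> complex mat" where "rhoBC psi = ptrace_A (density psi)"

definition pauli :: "nat \<Rightarrow> complex mat" where
  "pauli k = (if k = 1 then mat_of_rows_list 2 [[0, 1], [1, 0]]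
     else if k = 2 then mat_of_rows_list 2 [[0, -\<i>], [\<i>, 0]]
     else if k = 3 then mat_of_rows_list 2 [[1, 0], [0, -1]]
     else 1\<^sub>m 2)"

definition kron2 :: "complex mat \<Rightarrow> complex mat \<Rightarrow> complex mat" where
  "kron2 A B = mat 4 4 (\<lambda>(i,j). A $$ (i div 2, j div 2) * B $$ (i mod 2, j mod 2))"

definition mtrace :: "complex mat \<Rightarrow> complex" where
  "mtrace A = (\<Sum>i<dim_row A. A $$ (i,i))"

text \<open>t_kl = Tr[rho sigma_k (x) sigma_l]; real for Hermitian rho, so we take the real part.\<close>
definition corr_t :: "complex mat \<Rightarrow> nat \<Rightarrow> nat \<Rightarrow> real" where
  "corr_t rho k l = Re (mtrace (rho * kron2 (pauli k) (pauli l)))"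

definition S_corr :: "complex mat \<Rightarrow> real" where
  "S_corr rho = (\<Sum>k\<in>{1..3}. \<Sum>l\<in>{1..3}. (corr_t rho k l)^2)"

text \<open>The eigenvalues of rho*rho_tilde (with multiplicity, as roots of
  the characteristic polynomial) are real and nonnegative; lambda_i are their square roots,
  sorted in decreasing order.\<close>
definition rho_tilde_prod :: "complex mat \<Rightarrow> complex mat" where
  "rho_tilde_prod rho = rho * kron2 (pauli 2) (pauli 2) * map_mat cnj rho * kron2 (pauli 2) (pauli 2)"

definition wootters_lambdas :: "complex mat \<Rightarrow> real list" where
  "wootters_lambdas rho = rev (sorted_list_of_multiset
      (image_mset (\<lambda>z. sqrt (Re z)) (proots (char_poly (rho_tilde_prod rho)))))"

definition concurrence :: "complex mat \<Rightarrow> real" where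
  "concurrence rho = (let l = wootters_lambdas rho in max 0 (l!0 - l!1 - l!2 - l!3))"

definition S_max_total :: "complex vec \<Rightarrow> real" where
  "S_max_total psi = (let sAB = S_corr (rhoAB psi); sAC = S_corr (rhoAC psi); sBC = S_corr (rhoBC psi)
     in Max {sAB + sAC, sAB + sBC, sAC + sBC})"

definition E_W :: "complex vec \<Rightarrow> real" where
  "E_W psi = Min {(concurrence (rhoAB psi))^2, (concurrence (rhoAC psi))^2, (concurrence (rhoBC psi))^2}"

end

theory Submission
  imports Defs "Jordan_Normal_Form.Schur_Decomposition"
begin

(* For a pure state the reduced state of two qubits is rho = |v><v| + |w><w|, where v, w are
   the slices of the amplitude tensor along the traced-out qubit. Then rho rho~ has the same
   nonzero spectrum as conj(K) K, where K is the 2x2 Gram matrix of v, w for the bilinear form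
   x^T (sigma_y (x) sigma_y) y, so C^2 = |K|_F^2 - 2 |det K|, and |det K| (the 3-tangle) is the
   same for all three pairs. The Bloch expansion gives S = 2 tr (rho rho~) + 2 tr rho^2 - 1 with
   tr (rho rho~) = |K|_F^2, and together with the identity 4 det rho_X = |K_XY|_F^2 + |K_XZ|_F^2
   this yields S_XY = 1 + 2 C_XY^2 - C_XZ^2 - C_YZ^2. Hence S_XY + S_XZ + 3 C_YZ^2 equals
   2 + C_AB^2 + C_AC^2 + C_BC^2, and it remains to show that the squared concurrences sum to at
   most 4/3. A unitary on qubit A leaves all terms invariant and can make the first slice
   isotropic for the bilinear form; the bound then reduces to (2P - Q)^2 >= 0 for the
   squared norms P, Q of the two slices. *)

section \<open>Characteristic polynomials\<close>

lemma char_poly_zero_mat: "char_poly (0\<^sub>m n n :: complex mat) = monom 1 n"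
proof -
  have "char_poly (0\<^sub>m n n :: complex mat) = (\<Prod>a\<leftarrow>diag_mat (0\<^sub>m n n). [:- a, 1:])"
    by (rule char_poly_upper_triangular[of _ n]) (auto simp: upper_triangular_def)
  moreover have "map (\<lambda>a. [:- a, 1:]) (diag_mat (0\<^sub>m n n :: complex mat)) = map (\<lambda>_. [:0, 1:]) [0..<n]"
    unfolding diag_mat_def by (auto intro!: map_cong)
  ultimately show ?thesis
    by (simp add: map_replicate_const prod_list_replicate monom_altdef)
qed

lemma char_poly_mult_comm:
  fixes A B :: "complex mat"
  assumes A: "A \<in> carrier_mat n m" and B: "B \<in> carrier_mat m n"
  shows "char_poly (A * B) * monom 1 m = monom 1 n * char_poly (B * A)"
proof -
  \<comment> \<open>The block matrices below are conjugate under \<open>[[1, A], [0, 1]]\<close>.\<close>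
  define X1 where "X1 = four_block_mat (A * B) (0\<^sub>m n m) B (0\<^sub>m m m)"
  define X2 where "X2 = four_block_mat (0\<^sub>m n n) (0\<^sub>m n m) B (B * A)"
  define P where "P = four_block_mat (1\<^sub>m n) A (0\<^sub>m m n) (1\<^sub>m m)"
  define Q where "Q = four_block_mat (1\<^sub>m n) (- A) (0\<^sub>m m n) (1\<^sub>m m)"
  have AB: "A * B \<in> carrier_mat n n" and BA: "B * A \<in> carrier_mat m m" using A B by auto
  have split: "\<exists>es. char_poly C = (\<Prod>a\<leftarrow>es. [:- a, 1:])" if "C \<in> carrier_mat k k" for C :: "complex mat" and k
    using char_poly_factorized[OF that] by blast
  have cp1: "char_poly X1 = char_poly (A * B) * char_poly (0\<^sub>m m m :: complex mat)"
    unfolding X1_def by (rule char_poly_0_block'[OF refl split[OF AB] split[OF zero_carrier_mat] AB B]) auto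
  have cp2: "char_poly X2 = char_poly (0\<^sub>m n n :: complex mat) * char_poly (B * A)"
    unfolding X2_def by (rule char_poly_0_block'[OF refl split[OF zero_carrier_mat] split[OF BA] _ B BA]) auto
  have "P * Q = 1\<^sub>m (n + m)" unfolding P_def Q_def
    by (subst mult_four_block_mat[OF one_carrier_mat A zero_carrier_mat one_carrier_mat])
       (use A in \<open>auto simp flip: four_block_one_mat\<close>)
  moreover have "Q * P = 1\<^sub>m (n + m)" unfolding P_def Q_def
    by (subst mult_four_block_mat[OF one_carrier_mat uminus_carrier_mat[OF A] zero_carrier_mat one_carrier_mat])
       (use A in \<open>auto simp flip: four_block_one_mat\<close>)
  moreover have "X1 = P * X2 * Q"
  proof -
    have "P * X2 = four_block_mat (A * B) (A * (B * A)) B (B * A)" unfolding P_def X2_def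
      by (subst mult_four_block_mat[OF one_carrier_mat A zero_carrier_mat one_carrier_mat]) (use A B in auto)
    also have "\<dots> * Q = X1" unfolding Q_def X1_def
      by (subst mult_four_block_mat[OF AB _ B BA]) (use A B in auto)
    finally show ?thesis by simp
  qed
  moreover have "{X1, X2, P, Q} \<subseteq> carrier_mat (n + m) (n + m)"
    using A B by (auto simp: X1_def X2_def P_def Q_def)
  ultimately have "similar_mat X1 X2" by (intro similar_matI) auto
  from char_poly_similar[OF this] cp1 cp2 show ?thesis by (simp add: char_poly_zero_mat mult.commute)
qed

lemma char_poly_mat_2:
  fixes f :: "nat \<times> nat \<Rightarrow> complex"
  shows "char_poly (mat 2 2 f) = [: f (0,0) * f (1,1) - f (0,1) * f (1,0), - (f (0,0) + f (1,1)), 1 :]"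
proof -
  let ?C = "char_poly_matrix (mat 2 2 f)"
  have "char_poly (mat 2 2 f) = (\<Sum>j<2. ?C $$ (0,j) * cofactor ?C 0 j)"
    unfolding char_poly_def by (rule laplace_expansion_row) auto
  also have "\<dots> = ?C $$ (0,0) * cofactor ?C 0 0 + ?C $$ (0,1) * cofactor ?C 0 1"
    by (simp add: numeral_2_eq_2)
  also have "cofactor ?C 0 0 = ?C $$ (1,1)"
    unfolding cofactor_def by (subst det_single) (auto simp: mat_delete_def char_poly_matrix_def)
  also have "cofactor ?C 0 1 = - ?C $$ (1,0)"
    unfolding cofactor_def by (subst det_single) (auto simp: mat_delete_def char_poly_matrix_def)
  finally show ?thesis
    by (simp add: char_poly_matrix_def algebra_simps mult_pCons_left mult_pCons_right)
qed

lemma real_quadratic_nonneg_roots: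
  fixes p s :: real
  assumes "0 \<le> p" and "4 * p \<le> s\<^sup>2" and "0 \<le> s"
  shows "\<exists>r1 r2. r1 + r2 = s \<and> r1 * r2 = p \<and> 0 \<le> r2 \<and> r2 \<le> r1"
proof -
  define d where "d = sqrt (s\<^sup>2 - 4 * p)"
  have d: "0 \<le> d" "d\<^sup>2 = s\<^sup>2 - 4 * p" using assms by (auto simp: d_def)
  then have "d\<^sup>2 \<le> s\<^sup>2" using assms by linarith
  then have "d \<le> s" using assms(3) by (rule power2_le_imp_le)
  moreover have "(s + d) / 2 * ((s - d) / 2) = p"
    using d by (simp add: field_simps power2_eq_square)
  ultimately show ?thesis using d by (intro exI[of _ "(s + d) / 2"] exI[of _ "(s - d) / 2"]) (auto simp: field_simps)
qed

lemma concurrence_of_char_poly: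
  assumes cp: "char_poly (rho_tilde_prod R) = monom 1 2 * ([:- of_real r1, 1:] * [:- of_real r2, 1:])"
    and "0 \<le> r2" and "r2 \<le> r1"
  shows "concurrence R = sqrt r1 - sqrt r2"
proof -
  have "monom (1::complex) 2 = [:0, 1:] * [:0, 1:]"
    by (simp add: monom_altdef power2_eq_square)
  then have "proots (char_poly (rho_tilde_prod R)) = {# 0, 0, of_real r1, of_real r2 #}"
    unfolding cp by (simp add: proots_mult del: mult_pCons_left mult_pCons_right)
  then have "wootters_lambdas R = rev (sort [0, 0, sqrt r1, sqrt r2])"
    unfolding wootters_lambdas_def by simp
  also have "sort [0, 0, sqrt r1, sqrt r2] = [0, 0, sqrt r2, sqrt r1]"
    using assms(2,3) by (simp add: real_sqrt_le_iff del: real_sqrt_le_mono)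
  finally show ?thesis
    using assms(3) by (simp add: concurrence_def real_sqrt_le_mono)
qed

section \<open>Spin flip and correlation strength\<close>

definition spin_flip :: "complex mat" where
  "spin_flip = mat 4 4 (\<lambda>(i,j). if i + j = 3 then (if i = 0 \<or> i = 3 then -1 else 1) else 0)"

lemma kron2_pauli_2_2: "kron2 (pauli 2) (pauli 2) = spin_flip"
proof (rule eq_matI)
  fix i j assume "i < dim_row spin_flip" "j < dim_col spin_flip"
  then have "i \<in> {0,1,2,3}" "j \<in> {0,1,2,3}" by (auto simp: spin_flip_def)
  then show "kron2 (pauli 2) (pauli 2) $$ (i, j) = spin_flip $$ (i, j)"
    by (auto simp: kron2_def spin_flip_def pauli_def mat_of_rows_list_def)
qed (auto simp: kron2_def spin_flip_def)

text \<open>The symmetric bilinear form \<open>v\<^sup>T (\<sigma>\<^sub>2 \<otimes> \<sigma>\<^sub>2) w\<close> on \<open>\<complex>\<^sup>4\<close>.\<close>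
definition flip_form :: "(nat \<Rightarrow> complex) \<Rightarrow> (nat \<Rightarrow> complex) \<Rightarrow> complex" where
  "flip_form v w = - v 0 * w 3 + v 1 * w 2 + v 2 * w 1 - v 3 * w 0"

definition flip_norm :: "(nat \<Rightarrow> complex) \<Rightarrow> (nat \<Rightarrow> complex) \<Rightarrow> real" where
  "flip_norm v w = (cmod (flip_form v v))\<^sup>2 + 2 * (cmod (flip_form v w))\<^sup>2 + (cmod (flip_form w w))\<^sup>2"

definition flip_det :: "(nat \<Rightarrow> complex) \<Rightarrow> (nat \<Rightarrow> complex) \<Rightarrow> complex" where
  "flip_det v w = flip_form v v * flip_form w w - (flip_form v w)\<^sup>2"

lemma flip_form_commute: "flip_form v w = flip_form w v"
  unfolding flip_form_def by (simp add: algebra_simps)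

lemma sum_lessThan_2: "(\<Sum>i<2::nat. f i) = f 0 + f 1"
  by (simp add: numeral_2_eq_2)

lemma sum_lessThan_4: "(\<Sum>i<4::nat. f i) = f 0 + f 1 + f 2 + f 3"
  by (simp add: numeral_eq_Suc add.assoc)

definition sq_norm4 :: "(nat \<Rightarrow> complex) \<Rightarrow> real" where
  "sq_norm4 v = (\<Sum>i<4. (cmod (v i))\<^sup>2)"

definition inner4 :: "(nat \<Rightarrow> complex) \<Rightarrow> (nat \<Rightarrow> complex) \<Rightarrow> complex" where
  "inner4 v w = (\<Sum>i<4. v i * cnj (w i))"

definition gram_det4 :: "(nat \<Rightarrow> complex) \<Rightarrow> (nat \<Rightarrow> complex) \<Rightarrow> real" where
  "gram_det4 v w = sq_norm4 v * sq_norm4 w - (cmod (inner4 v w))\<^sup>2"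

definition dyad_sum :: "(nat \<Rightarrow> complex) \<Rightarrow> (nat \<Rightarrow> complex) \<Rightarrow> complex mat" where
  "dyad_sum v w = mat 4 4 (\<lambda>(i,j). v i * cnj (v j) + w i * cnj (w j))"

definition flip_gram :: "(nat \<Rightarrow> complex) \<Rightarrow> (nat \<Rightarrow> complex) \<Rightarrow> complex mat" where
  "flip_gram v w = mat 2 2 (\<lambda>(p,q). flip_form (if p = 0 then v else w) (if q = 0 then v else w))"

text \<open>With \<open>M = (v | w)\<close> we have \<open>\<rho> = M M\<^sup>H\<close>, so \<open>\<rho> \<rho>\<^sup>~ = M N\<close> with
  \<open>N = M\<^sup>H \<Sigma> conj M M\<^sup>T \<Sigma>\<close>, \<open>\<Sigma> = \<sigma>\<^sub>2 \<otimes> \<sigma>\<^sub>2\<close>, and \<open>N M = conj K * K\<close> for \<open>K = M\<^sup>T \<Sigma> M\<close>.\<close>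
lemma rho_tilde_prod_dyad_sum_factor:
  fixes v w :: "nat \<Rightarrow> complex"
  shows "\<exists>M N. M \<in> carrier_mat 4 2 \<and> N \<in> carrier_mat 2 4
    \<and> rho_tilde_prod (dyad_sum v w) = M * N
    \<and> N * M = map_mat cnj (flip_gram v w) * flip_gram v w"
proof -
  define u where "u = (\<lambda>p::nat. if p = 0 then v else w)"
  define M where "M = mat 4 2 (\<lambda>(i,p). u p i)"
  define Mh where "Mh = mat 2 4 (\<lambda>(p,i). cnj (u p i))"
  define Mc where "Mc = mat 4 2 (\<lambda>(i,p). cnj (u p i))"
  define Mt where "Mt = mat 2 4 (\<lambda>(p,i). u p i)"
  have carrier: "M \<in> carrier_mat 4 2" "Mh \<in> carrier_mat 2 4" "Mc \<in> carrier_mat 4 2"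
    "Mt \<in> carrier_mat 2 4" "spin_flip \<in> carrier_mat 4 4"
    by (auto simp: M_def Mh_def Mc_def Mt_def spin_flip_def)
  then have carrier_N: "Mh * spin_flip * Mc * Mt * spin_flip \<in> carrier_mat 2 4"
    by auto
  have "dyad_sum v w = M * Mh"
    by (rule eq_matI) (auto simp: dyad_sum_def M_def Mh_def u_def scalar_prod_def atLeast0LessThan sum_lessThan_2)
  moreover have "map_mat cnj (dyad_sum v w) = Mc * Mt"
    by (rule eq_matI) (auto simp: dyad_sum_def Mc_def Mt_def u_def scalar_prod_def atLeast0LessThan sum_lessThan_2)
  ultimately have "rho_tilde_prod (dyad_sum v w) = M * Mh * spin_flip * (Mc * Mt) * spin_flip"
    unfolding rho_tilde_prod_def kron2_pauli_2_2 by simp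
  also have "M * Mh * spin_flip = M * (Mh * spin_flip)"
    using carrier by (intro assoc_mult_mat) auto
  also have "M * (Mh * spin_flip) * (Mc * Mt) = M * (Mh * spin_flip * (Mc * Mt))"
    using carrier by (intro assoc_mult_mat) auto
  also have "Mh * spin_flip * (Mc * Mt) = Mh * spin_flip * Mc * Mt"
    using carrier by (intro assoc_mult_mat[symmetric]) auto
  also have "M * (Mh * spin_flip * Mc * Mt) * spin_flip = M * (Mh * spin_flip * Mc * Mt * spin_flip)"
    using carrier by (intro assoc_mult_mat) auto
  finally have MN: "rho_tilde_prod (dyad_sum v w) = M * (Mh * spin_flip * Mc * Mt * spin_flip)" .
  have "Mh * spin_flip * Mc * Mt * spin_flip = (Mh * spin_flip * Mc) * (Mt * spin_flip)"
    using carrier by (intro assoc_mult_mat) auto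
  then have "Mh * spin_flip * Mc * Mt * spin_flip * M = (Mh * spin_flip * Mc) * (Mt * spin_flip) * M"
    by simp
  also have "\<dots> = (Mh * spin_flip * Mc) * (Mt * spin_flip * M)"
    using carrier by (intro assoc_mult_mat) auto
  moreover have "Mt * spin_flip * M = flip_gram v w"
    by (rule eq_matI)
       (auto simp: Mt_def M_def u_def flip_gram_def spin_flip_def flip_form_def scalar_prod_def
         atLeast0LessThan sum_lessThan_4 algebra_simps)
  moreover have "Mh * spin_flip * Mc = map_mat cnj (flip_gram v w)"
    by (rule eq_matI)
       (auto simp: Mh_def Mc_def u_def flip_gram_def spin_flip_def flip_form_def scalar_prod_def
         atLeast0LessThan sum_lessThan_4 algebra_simps)
  ultimately have "Mh * spin_flip * Mc * Mt * spin_flip * M = map_mat cnj (flip_gram v w) * flip_gram v w"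
    by simp
  with carrier carrier_N MN show ?thesis by blast
qed

lemma of_real_cmod_sq: "(complex_of_real (cmod z))\<^sup>2 = z * cnj z"
  using complex_norm_square[of z] by simp

lemma of_real_Re: "complex_of_real (Re z) = (z + cnj z) / 2"
  by (simp add: complex_add_cnj)

lemma of_real_Im: "complex_of_real (Im z) = \<i> * (cnj z - z) / 2"
  by (simp add: complex_eq_iff)

lemmas of_real_expand = of_real_add of_real_diff of_real_mult of_real_power of_real_numeral
  of_real_minus of_real_neg_numeral of_real_1 of_real_0

lemmas cnj_expand = complex_cnj_add complex_cnj_mult complex_cnj_diff complex_cnj_minus
  complex_cnj_cnj complex_cnj_numeral complex_cnj_one complex_cnj_zero complex_cnj_power
  complex_cnj_complex_of_real

lemma corr_t_mat_4:
  fixes r :: "nat \<times> nat \<Rightarrow> complex"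
  shows "corr_t (mat 4 4 r) 1 1 = Re (r (0,3) + r (1,2) + r (2,1) + r (3,0))"
    and "corr_t (mat 4 4 r) 1 2 = Re (\<i> * (r (0,3) - r (1,2) + r (2,1) - r (3,0)))"
    and "corr_t (mat 4 4 r) 1 3 = Re (r (0,2) - r (1,3) + r (2,0) - r (3,1))"
    and "corr_t (mat 4 4 r) 2 1 = Re (\<i> * (r (0,3) + r (1,2) - r (2,1) - r (3,0)))"
    and "corr_t (mat 4 4 r) 2 2 = Re (- r (0,3) + r (1,2) + r (2,1) - r (3,0))"
    and "corr_t (mat 4 4 r) 2 3 = Re (\<i> * (r (0,2) - r (1,3) - r (2,0) + r (3,1)))"
    and "corr_t (mat 4 4 r) 3 1 = Re (r (0,1) + r (1,0) - r (2,3) - r (3,2))"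
    and "corr_t (mat 4 4 r) 3 2 = Re (\<i> * (r (0,1) - r (1,0) - r (2,3) + r (3,2)))"
    and "corr_t (mat 4 4 r) 3 3 = Re (r (0,0) - r (1,1) - r (2,2) + r (3,3))"
  by (simp_all add: corr_t_def mtrace_def kron2_def scalar_prod_def atLeast0LessThan sum_lessThan_4
      pauli_def mat_of_rows_list_def algebra_simps)

lemma S_corr_expand:
  "S_corr R = (corr_t R 1 1)\<^sup>2 + (corr_t R 1 2)\<^sup>2 + (corr_t R 1 3)\<^sup>2
    + (corr_t R 2 1)\<^sup>2 + (corr_t R 2 2)\<^sup>2 + (corr_t R 2 3)\<^sup>2
    + (corr_t R 3 1)\<^sup>2 + (corr_t R 3 2)\<^sup>2 + (corr_t R 3 3)\<^sup>2"
proof -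
  have "{1..3::nat} = {1,2,3}" by auto
  then show ?thesis by (simp add: S_corr_def)
qed

text \<open>For Hermitian \<open>\<rho>\<close> this is \<open>S = 2 tr (\<rho> \<rho>\<^sup>~) + 2 tr \<rho>\<^sup>2 - (tr \<rho>)\<^sup>2\<close>, read off from the Pauli
  expansion of \<open>\<rho>\<close>.\<close>
lemma S_corr_hermitian:
  fixes r :: "nat \<times> nat \<Rightarrow> complex"
  assumes herm: "\<And>i j. i < 4 \<Longrightarrow> j < 4 \<Longrightarrow> r (j,i) = cnj (r (i,j))"
  shows "S_corr (mat 4 4 r) = 2 * Re (mtrace (rho_tilde_prod (mat 4 4 r)))
     + 2 * (\<Sum>i<4. \<Sum>j<4. (cmod (r (i,j)))\<^sup>2) - (cmod (\<Sum>i<4. r (i,i)))\<^sup>2"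
proof -
  have "cnj (r (i,j)) = r (j,i)" if "i < 4" "j < 4" for i j
    using herm[OF that] by simp
  then have "complex_of_real (S_corr (mat 4 4 r)) = complex_of_real (2 * Re (mtrace (rho_tilde_prod (mat 4 4 r)))
     + 2 * (\<Sum>i<4. \<Sum>j<4. (cmod (r (i,j)))\<^sup>2) - (cmod (\<Sum>i<4. r (i,i)))\<^sup>2)"
    unfolding S_corr_expand corr_t_mat_4 rho_tilde_prod_def kron2_pauli_2_2
    by (simp add: mtrace_def spin_flip_def scalar_prod_def atLeast0LessThan sum_lessThan_2 sum_lessThan_4
        of_real_expand of_real_cmod_sq of_real_Re of_real_Im cnj_expand complex_cnj_divide
        numeral_2_eq_2[symmetric] numeral_3_eq_3[symmetric])
       (simp add: algebra_simps power2_eq_square)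
  then show ?thesis by (simp only: of_real_eq_iff)
qed

lemma mtrace_mult_comm:
  assumes "A \<in> carrier_mat n m" and "B \<in> carrier_mat m n"
  shows "mtrace (A * B) = mtrace (B * A)"
  using assms by (auto simp: mtrace_def scalar_prod_def atLeast0LessThan mult.commute intro: sum.swap)

lemma sum_sq_dyad_sum_entries:
  "(\<Sum>i<4. \<Sum>j<4. (cmod (v i * cnj (v j) + w i * cnj (w j)))\<^sup>2) =
     (sq_norm4 v)\<^sup>2 + (sq_norm4 w)\<^sup>2 + 2 * (cmod (inner4 v w))\<^sup>2"
proof -
  have "complex_of_real (\<Sum>i<4. \<Sum>j<4. (cmod (v i * cnj (v j) + w i * cnj (w j)))\<^sup>2) =
      complex_of_real ((sq_norm4 v)\<^sup>2 + (sq_norm4 w)\<^sup>2 + 2 * (cmod (inner4 v w))\<^sup>2)"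
    unfolding sq_norm4_def inner4_def of_real_sum sum_lessThan_4 of_real_expand of_real_cmod_sq cnj_expand
    by (simp add: algebra_simps power2_eq_square)
  then show ?thesis by (simp only: of_real_eq_iff)
qed

section \<open>Two vectors in \<open>\<complex>\<^sup>4\<close>\<close>

lemma flip_form_unitary_mix:
  fixes \<alpha> \<beta> :: complex and x y :: "nat \<Rightarrow> complex"
  defines "x' \<equiv> \<lambda>i. \<alpha> * x i + \<beta> * y i" and "y' \<equiv> \<lambda>i. - cnj \<beta> * x i + cnj \<alpha> * y i"
  shows "flip_form x' x' = \<alpha>\<^sup>2 * flip_form x x + 2 * \<alpha> * \<beta> * flip_form x y + \<beta>\<^sup>2 * flip_form y y"
    and "flip_form x' y' = - \<alpha> * cnj \<beta> * flip_form x x + (\<alpha> * cnj \<alpha> - \<beta> * cnj \<beta>) * flip_form x y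
           + \<beta> * cnj \<alpha> * flip_form y y"
    and "flip_form y' y' = (cnj \<beta>)\<^sup>2 * flip_form x x - 2 * cnj \<alpha> * cnj \<beta> * flip_form x y
           + (cnj \<alpha>)\<^sup>2 * flip_form y y"
  unfolding x'_def y'_def flip_form_def by (simp_all add: algebra_simps power2_eq_square)

lemma unit_pair_cnj:
  assumes "(cmod \<alpha>)\<^sup>2 + (cmod \<beta>)\<^sup>2 = 1"
  shows "\<alpha> * cnj \<alpha> + \<beta> * cnj \<beta> = 1"
proof -
  have "complex_of_real ((cmod \<alpha>)\<^sup>2 + (cmod \<beta>)\<^sup>2) = 1" using assms by simp
  then show ?thesis by (simp only: of_real_add of_real_power of_real_cmod_sq)
qed

text \<open>\<open>a'\<close>, \<open>b'\<close>, \<open>c'\<close> are the entries of \<open>U K U\<^sup>T\<close> for \<open>K = [[a, b], [b, c]]\<close> and the unitary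
  \<open>U = [[\<alpha>, \<beta>], [-cnj \<beta>, cnj \<alpha>]]\<close>.\<close>
lemma symmetric_form_unitary_invariants:
  fixes \<alpha> \<beta> a b c :: complex
  assumes one: "\<alpha> * cnj \<alpha> + \<beta> * cnj \<beta> = 1"
  defines "a' \<equiv> \<alpha>\<^sup>2 * a + 2 * \<alpha> * \<beta> * b + \<beta>\<^sup>2 * c"
    and "b' \<equiv> - \<alpha> * cnj \<beta> * a + (\<alpha> * cnj \<alpha> - \<beta> * cnj \<beta>) * b + \<beta> * cnj \<alpha> * c"
    and "c' \<equiv> (cnj \<beta>)\<^sup>2 * a - 2 * cnj \<alpha> * cnj \<beta> * b + (cnj \<alpha>)\<^sup>2 * c"
  shows "(cmod a')\<^sup>2 + 2 * (cmod b')\<^sup>2 + (cmod c')\<^sup>2 = (cmod a)\<^sup>2 + 2 * (cmod b)\<^sup>2 + (cmod c)\<^sup>2"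
    and "a' * c' - b'\<^sup>2 = a * c - b\<^sup>2"
proof -
  have "complex_of_real ((cmod a')\<^sup>2 + 2 * (cmod b')\<^sup>2 + (cmod c')\<^sup>2)
      = (\<alpha> * cnj \<alpha> + \<beta> * cnj \<beta>)\<^sup>2 * complex_of_real ((cmod a)\<^sup>2 + 2 * (cmod b)\<^sup>2 + (cmod c)\<^sup>2)"
    unfolding a'_def b'_def c'_def of_real_expand of_real_cmod_sq cnj_expand by (simp add: algebra_simps power2_eq_square)
  then show "(cmod a')\<^sup>2 + 2 * (cmod b')\<^sup>2 + (cmod c')\<^sup>2 = (cmod a)\<^sup>2 + 2 * (cmod b)\<^sup>2 + (cmod c)\<^sup>2"
    unfolding one by (simp only: power_one mult_1 of_real_eq_iff)
  have "a' * c' - b'\<^sup>2 = (\<alpha> * cnj \<alpha> + \<beta> * cnj \<beta>)\<^sup>2 * (a * c - b\<^sup>2)"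
    unfolding a'_def b'_def c'_def by (simp add: algebra_simps power2_eq_square)
  then show "a' * c' - b'\<^sup>2 = a * c - b\<^sup>2"
    unfolding one by simp
qed

lemma gram_invariants_unitary_mix:
  fixes \<alpha> \<beta> :: complex and x y :: "nat \<Rightarrow> complex"
  assumes unit: "(cmod \<alpha>)\<^sup>2 + (cmod \<beta>)\<^sup>2 = 1"
  defines "x' \<equiv> \<lambda>i. \<alpha> * x i + \<beta> * y i" and "y' \<equiv> \<lambda>i. - cnj \<beta> * x i + cnj \<alpha> * y i"
  shows "sq_norm4 x' + sq_norm4 y' = sq_norm4 x + sq_norm4 y" and "gram_det4 x' y' = gram_det4 x y"
proof -
  have one: "\<alpha> * cnj \<alpha> + \<beta> * cnj \<beta> = 1" using unit by (rule unit_pair_cnj)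
  define P Q g where "P = complex_of_real (sq_norm4 x)" and "Q = complex_of_real (sq_norm4 y)"
    and "g = inner4 x y"
  have cnj_PQ: "cnj P = P" "cnj Q = Q" by (simp_all add: P_def Q_def)
  have P': "complex_of_real (sq_norm4 x') = \<alpha> * cnj \<alpha> * P + \<beta> * cnj \<beta> * Q + \<alpha> * cnj \<beta> * g + \<beta> * cnj \<alpha> * cnj g"
    unfolding x'_def P_def Q_def g_def sq_norm4_def inner4_def sum_lessThan_4 of_real_expand of_real_cmod_sq cnj_expand
    by (simp add: algebra_simps)
  have Q': "complex_of_real (sq_norm4 y') = \<beta> * cnj \<beta> * P + \<alpha> * cnj \<alpha> * Q - \<alpha> * cnj \<beta> * g - \<beta> * cnj \<alpha> * cnj g"
    unfolding y'_def P_def Q_def g_def sq_norm4_def inner4_def sum_lessThan_4 of_real_expand of_real_cmod_sq cnj_expand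
    by (simp add: algebra_simps)
  have g': "inner4 x' y' = - \<alpha> * \<beta> * P + \<alpha> * \<beta> * Q + \<alpha>\<^sup>2 * g - \<beta>\<^sup>2 * cnj g"
    unfolding x'_def y'_def P_def Q_def g_def sq_norm4_def inner4_def sum_lessThan_4 of_real_expand of_real_cmod_sq cnj_expand
    by (simp add: algebra_simps power2_eq_square)
  have "complex_of_real (sq_norm4 x' + sq_norm4 y') = (\<alpha> * cnj \<alpha> + \<beta> * cnj \<beta>) * (P + Q)"
    unfolding of_real_add P' Q' by (simp add: algebra_simps)
  then show "sq_norm4 x' + sq_norm4 y' = sq_norm4 x + sq_norm4 y"
    unfolding one P_def Q_def by (simp only: mult_1 of_real_add[symmetric] of_real_eq_iff)
  have "complex_of_real (gram_det4 x' y') = (\<alpha> * cnj \<alpha> + \<beta> * cnj \<beta>)\<^sup>2 * (P * Q - g * cnj g)"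
    unfolding gram_det4_def of_real_diff of_real_mult of_real_power of_real_cmod_sq P' Q' g'
    by (simp add: cnj_expand cnj_PQ) (simp add: algebra_simps power2_eq_square)
  also have "\<dots> = complex_of_real (gram_det4 x y)"
    unfolding one gram_det4_def P_def Q_def g_def of_real_diff of_real_mult of_real_power of_real_cmod_sq
    by simp
  finally show "gram_det4 x' y' = gram_det4 x y"
    by (simp only: of_real_eq_iff)
qed

lemma flip_invariants_unitary_mix:
  fixes \<alpha> \<beta> :: complex and x y :: "nat \<Rightarrow> complex"
  assumes unit: "(cmod \<alpha>)\<^sup>2 + (cmod \<beta>)\<^sup>2 = 1"
  defines "x' \<equiv> \<lambda>i. \<alpha> * x i + \<beta> * y i" and "y' \<equiv> \<lambda>i. - cnj \<beta> * x i + cnj \<alpha> * y i"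
  shows "flip_norm x' y' = flip_norm x y" and "flip_det x' y' = flip_det x y"
  using symmetric_form_unitary_invariants[OF unit_pair_cnj[OF unit], of "flip_form x x" "flip_form x y" "flip_form y y"]
  unfolding flip_norm_def flip_det_def
    flip_form_unitary_mix[where \<alpha> = \<alpha> and \<beta> = \<beta> and x = x and y = y, folded x'_def y'_def]
  by (simp_all only:)

lemma flip_form_self_bound: "cmod (flip_form v v) \<le> sq_norm4 v"
proof -
  have "flip_form v v = 2 * (v 1 * v 2) - 2 * (v 0 * v 3)"
    unfolding flip_form_def by (simp add: algebra_simps)
  then have "cmod (flip_form v v) \<le> 2 * (cmod (v 1) * cmod (v 2)) + 2 * (cmod (v 0) * cmod (v 3))"
    by (metis norm_triangle_ineq4 norm_mult norm_numeral)
  also have "\<dots> \<le> sq_norm4 v"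
    using sum_squares_bound[of "cmod (v 1)" "cmod (v 2)"] sum_squares_bound[of "cmod (v 0)" "cmod (v 3)"]
    by (simp add: sq_norm4_def sum_lessThan_4 power2_eq_square)
  finally show ?thesis .
qed

lemma isotropic_unit_pair:
  fixes a b c :: complex
  shows "\<exists>\<alpha> \<beta>. (cmod \<alpha>)\<^sup>2 + (cmod \<beta>)\<^sup>2 = 1 \<and> \<alpha>\<^sup>2 * a + 2 * \<alpha> * \<beta> * b + \<beta>\<^sup>2 * c = 0"
proof (cases "c = 0")
  case True
  then show ?thesis by (intro exI[of _ 0] exI[of _ 1]) simp
next
  case False
  define t where "t = (csqrt (b\<^sup>2 - a * c) - b) / c"
  have root: "a + 2 * t * b + t\<^sup>2 * c = 0"
  proof -
    have "c * (a + 2 * t * b + t\<^sup>2 * c) = c * a + 2 * (c * t) * b + (c * t)\<^sup>2"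
      by (simp add: algebra_simps power2_eq_square)
    also have "c * t = csqrt (b\<^sup>2 - a * c) - b" using False by (simp add: t_def)
    also have "c * a + 2 * (csqrt (b\<^sup>2 - a * c) - b) * b + (csqrt (b\<^sup>2 - a * c) - b)\<^sup>2 = 0"
      by (simp add: algebra_simps power2_eq_square) (simp add: power2_eq_square[symmetric])
    finally show ?thesis using False by simp
  qed
  define s where "s = sqrt (1 + (cmod t)\<^sup>2)"
  have s: "s > 0" "s\<^sup>2 = 1 + (cmod t)\<^sup>2" "1 + (cmod t)\<^sup>2 > 0"
    by (simp_all add: s_def add_pos_nonneg)
  show ?thesis
  proof (rule exI[of _ "complex_of_real (1 / s)"], rule exI[of _ "t / complex_of_real s"], rule conjI)
    show "(cmod (complex_of_real (1 / s)))\<^sup>2 + (cmod (t / complex_of_real s))\<^sup>2 = 1"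
      using s by (simp add: norm_divide power_divide add_divide_distrib[symmetric])
    have "(complex_of_real (1 / s))\<^sup>2 * a + 2 * complex_of_real (1 / s) * (t / complex_of_real s) * b
        + (t / complex_of_real s)\<^sup>2 * c = (a + 2 * t * b + t\<^sup>2 * c) / (complex_of_real s)\<^sup>2"
      using s by (simp add: field_simps power2_eq_square)
    then show "(complex_of_real (1 / s))\<^sup>2 * a + 2 * complex_of_real (1 / s) * (t / complex_of_real s) * b
        + (t / complex_of_real s)\<^sup>2 * c = 0"
      using root by simp
  qed
qed

lemma flip_gram_bound_isotropic:
  assumes iso: "flip_form x x = 0"
  shows "4 * gram_det4 x y + flip_norm x y - 6 * cmod (flip_det x y) \<le> 4/3 * (sq_norm4 x + sq_norm4 y)\<^sup>2"
proof -
  define P Q where "P = sq_norm4 x" and "Q = sq_norm4 y"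
  have "4 * gram_det4 x y + flip_norm x y - 6 * cmod (flip_det x y)
      = 4 * gram_det4 x y + (cmod (flip_form y y))\<^sup>2 - 4 * (cmod (flip_form x y))\<^sup>2"
    by (simp add: flip_norm_def flip_det_def iso norm_power)
  also have "\<dots> \<le> 4 * (P * Q) + Q\<^sup>2"
  proof -
    have "cmod (flip_form y y) \<le> Q" unfolding Q_def by (rule flip_form_self_bound)
    then have "(cmod (flip_form y y))\<^sup>2 \<le> Q\<^sup>2" by (intro power_mono) auto
    moreover have "gram_det4 x y \<le> P * Q" by (simp add: gram_det4_def P_def Q_def)
    moreover have "0 \<le> (cmod (flip_form x y))\<^sup>2" by simp
    ultimately show ?thesis by linarith
  qed
  also have "\<dots> \<le> 4/3 * (P + Q)\<^sup>2"
    using zero_le_power2[of "2 * P - Q"] by (simp add: power2_eq_square algebra_simps)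
  finally show ?thesis by (simp add: P_def Q_def)
qed

text \<open>All terms are invariant under a unitary mix of \<open>x\<close> and \<open>y\<close>, and a suitable mix makes
  \<open>x\<close> isotropic for the flip form.\<close>
lemma flip_gram_bound:
  "4 * gram_det4 x y + flip_norm x y - 6 * cmod (flip_det x y) \<le> 4/3 * (sq_norm4 x + sq_norm4 y)\<^sup>2"
proof -
  obtain \<alpha> \<beta> where unit: "(cmod \<alpha>)\<^sup>2 + (cmod \<beta>)\<^sup>2 = 1"
    and iso: "\<alpha>\<^sup>2 * flip_form x x + 2 * \<alpha> * \<beta> * flip_form x y + \<beta>\<^sup>2 * flip_form y y = 0"
    using isotropic_unit_pair by blast
  define x' y' where "x' = (\<lambda>i. \<alpha> * x i + \<beta> * y i)" and "y' = (\<lambda>i. - cnj \<beta> * x i + cnj \<alpha> * y i)"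
  have "flip_form x' x' = 0"
    using iso flip_form_unitary_mix(1)[of \<alpha> x \<beta> y] by (simp add: x'_def)
  then have "4 * gram_det4 x' y' + flip_norm x' y' - 6 * cmod (flip_det x' y')
      \<le> 4/3 * (sq_norm4 x' + sq_norm4 y')\<^sup>2"
    by (rule flip_gram_bound_isotropic)
  then show ?thesis
    using flip_invariants_unitary_mix[OF unit, of x y] gram_invariants_unitary_mix[OF unit, of x y]
    by (simp add: x'_def y'_def)
qed

definition minor2 :: "(nat \<Rightarrow> complex) \<Rightarrow> (nat \<Rightarrow> complex) \<Rightarrow> nat \<Rightarrow> nat \<Rightarrow> complex" where
  "minor2 x y i j = x i * y j - x j * y i"

lemma minor2_pluecker:
  "minor2 x y 0 1 * minor2 x y 2 3 - minor2 x y 0 2 * minor2 x y 1 3 + minor2 x y 0 3 * minor2 x y 1 2 = 0"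
  unfolding minor2_def by (simp add: algebra_simps)

lemma flip_det_eq_minors:
  "flip_det x y = 4 * minor2 x y 0 2 * minor2 x y 1 3 - (minor2 x y 0 3 + minor2 x y 1 2)\<^sup>2"
  unfolding flip_det_def flip_form_def minor2_def by (simp add: algebra_simps power2_eq_square)

lemma gram_det4_eq_sum_minors:
  "gram_det4 x y = (cmod (minor2 x y 0 1))\<^sup>2 + (cmod (minor2 x y 0 2))\<^sup>2 + (cmod (minor2 x y 0 3))\<^sup>2
     + (cmod (minor2 x y 1 2))\<^sup>2 + (cmod (minor2 x y 1 3))\<^sup>2 + (cmod (minor2 x y 2 3))\<^sup>2"
proof -
  have "complex_of_real (gram_det4 x y) = complex_of_real ((cmod (minor2 x y 0 1))\<^sup>2
     + (cmod (minor2 x y 0 2))\<^sup>2 + (cmod (minor2 x y 0 3))\<^sup>2 + (cmod (minor2 x y 1 2))\<^sup>2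
     + (cmod (minor2 x y 1 3))\<^sup>2 + (cmod (minor2 x y 2 3))\<^sup>2)"
    unfolding gram_det4_def sq_norm4_def inner4_def minor2_def sum_lessThan_4
      of_real_expand of_real_cmod_sq cnj_expand
    by (simp add: algebra_simps)
  then show ?thesis by (simp only: of_real_eq_iff)
qed

lemma cmod_parallelogram: "(cmod (a - b))\<^sup>2 + (cmod (a + b))\<^sup>2 = 2 * ((cmod a)\<^sup>2 + (cmod b)\<^sup>2)"
  unfolding cmod_power2 by (simp add: power2_eq_square algebra_simps)

section \<open>Two-qubit states of rank two\<close>

lemma char_poly_rho_tilde_prod_dyad_sum:
  "char_poly (rho_tilde_prod (dyad_sum v w)) =
     monom 1 2 * [: of_real ((cmod (flip_det v w))\<^sup>2), - of_real (flip_norm v w), 1 :]"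
proof -
  obtain M N where carrier: "M \<in> carrier_mat 4 2" "N \<in> carrier_mat 2 4"
    and MN: "rho_tilde_prod (dyad_sum v w) = M * N"
    and NM: "N * M = map_mat cnj (flip_gram v w) * flip_gram v w"
    using rho_tilde_prod_dyad_sum_factor by blast
  define K where "K p q = flip_form (if p = 0 then v else w) (if q = 0 then v else w)" for p q :: nat
  have NM_entries: "N * M = mat 2 2 (\<lambda>(p,q). cnj (K p 0) * K 0 q + cnj (K p 1) * K 1 q)"
    unfolding NM by (rule eq_matI) (auto simp: flip_gram_def K_def scalar_prod_def atLeast0LessThan sum_lessThan_2)
  have "K 1 0 = K 0 1" by (simp add: K_def flip_form_commute)
  moreover have cmod_sq: "complex_of_real (cmod z) * complex_of_real (cmod z) = z * cnj z" for z
    using complex_norm_square[of z] by (simp add: power2_eq_square)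
  ultimately have NM_poly:
    "char_poly (N * M) = [: of_real ((cmod (flip_det v w))\<^sup>2), - of_real (flip_norm v w), 1 :]"
    unfolding NM_entries char_poly_mat_2 flip_norm_def flip_det_def
    by (simp add: K_def power2_eq_square cmod_sq) (simp add: algebra_simps)
  have monom_4: "monom (1::complex) 4 = monom 1 2 * monom 1 2" by (simp add: mult_monom)
  have "char_poly (M * N) * monom 1 2 =
      (monom 1 2 * [: of_real ((cmod (flip_det v w))\<^sup>2), - of_real (flip_norm v w), 1 :]) * monom 1 2"
    unfolding char_poly_mult_comm[OF carrier] NM_poly monom_4 by (simp only: ac_simps)
  moreover have "monom (1::complex) 2 \<noteq> 0" by (simp add: monom_eq_0_iff)
  ultimately show ?thesis
    unfolding MN by (metis mult_right_cancel)
qed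

lemma concurrence_sq_dyad_sum:
  "(concurrence (dyad_sum v w))\<^sup>2 = flip_norm v w - 2 * cmod (flip_det v w)"
proof -
  define a b c where "a = flip_form v v" and "b = flip_form v w" and "c = flip_form w w"
  have "cmod (flip_det v w) \<le> cmod a * cmod c + (cmod b)\<^sup>2"
    using norm_triangle_ineq4[of "a * c" "b\<^sup>2"] by (simp add: flip_det_def a_def b_def c_def norm_mult norm_power)
  moreover have "2 * (cmod a * cmod c) \<le> (cmod a)\<^sup>2 + (cmod c)\<^sup>2"
    using sum_squares_bound[of "cmod a" "cmod c"] by (simp add: power2_eq_square)
  ultimately have "2 * cmod (flip_det v w) \<le> flip_norm v w"
    by (simp add: flip_norm_def a_def b_def c_def)
  then have "4 * (cmod (flip_det v w))\<^sup>2 \<le> (flip_norm v w)\<^sup>2"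
    using power_mono[of "2 * cmod (flip_det v w)" "flip_norm v w" 2] by (simp add: power_mult_distrib)
  moreover have "0 \<le> flip_norm v w" by (simp add: flip_norm_def)
  ultimately obtain r1 r2 where r: "r1 + r2 = flip_norm v w" "r1 * r2 = (cmod (flip_det v w))\<^sup>2"
      "0 \<le> r2" "r2 \<le> r1"
    using real_quadratic_nonneg_roots[of "(cmod (flip_det v w))\<^sup>2" "flip_norm v w"] by auto
  have "[: of_real ((cmod (flip_det v w))\<^sup>2), - of_real (flip_norm v w), 1 :]
      = [:- complex_of_real r1, 1:] * [:- complex_of_real r2, 1:]"
    by (simp flip: r(1,2) add: algebra_simps)
  then have "concurrence (dyad_sum v w) = sqrt r1 - sqrt r2"
    using char_poly_rho_tilde_prod_dyad_sum[of v w] r(3,4) by (simp add: concurrence_of_char_poly)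
  then have "(concurrence (dyad_sum v w))\<^sup>2 = r1 + r2 - 2 * sqrt (r1 * r2)"
    using r(3,4) by (simp add: power2_diff real_sqrt_mult)
  then show ?thesis using r(1,2) by simp
qed

lemma mtrace_rho_tilde_prod_dyad_sum:
  "mtrace (rho_tilde_prod (dyad_sum v w)) = complex_of_real (flip_norm v w)"
proof -
  obtain M N where carrier: "M \<in> carrier_mat 4 2" "N \<in> carrier_mat 2 4"
    and MN: "rho_tilde_prod (dyad_sum v w) = M * N"
    and NM: "N * M = map_mat cnj (flip_gram v w) * flip_gram v w"
    using rho_tilde_prod_dyad_sum_factor by blast
  have "mtrace (rho_tilde_prod (dyad_sum v w)) = mtrace (map_mat cnj (flip_gram v w) * flip_gram v w)"
    unfolding MN mtrace_mult_comm[OF carrier] NM ..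
  also have "\<dots> = complex_of_real (flip_norm v w)"
    unfolding flip_norm_def of_real_expand of_real_cmod_sq
    by (simp add: mtrace_def flip_gram_def scalar_prod_def atLeast0LessThan sum_lessThan_2
        flip_form_commute[of w v] algebra_simps power2_eq_square)
  finally show ?thesis .
qed

lemma S_corr_dyad_sum:
  "S_corr (dyad_sum v w) = (sq_norm4 v + sq_norm4 w)\<^sup>2 + 2 * flip_norm v w - 4 * gram_det4 v w"
proof -
  have "(\<Sum>i<4. v i * cnj (v i) + w i * cnj (w i)) = complex_of_real (sq_norm4 v + sq_norm4 w)"
    by (simp add: sq_norm4_def sum.distrib of_real_sum of_real_cmod_sq)
  then have "(cmod (\<Sum>i<4. v i * cnj (v i) + w i * cnj (w i)))\<^sup>2 = (sq_norm4 v + sq_norm4 w)\<^sup>2"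
    by (simp only: norm_of_real power2_abs)
  then have "S_corr (dyad_sum v w) = 2 * flip_norm v w
      + 2 * ((sq_norm4 v)\<^sup>2 + (sq_norm4 w)\<^sup>2 + 2 * (cmod (inner4 v w))\<^sup>2) - (sq_norm4 v + sq_norm4 w)\<^sup>2"
    unfolding dyad_sum_def
    by (subst S_corr_hermitian)
       (simp_all add: mtrace_rho_tilde_prod_dyad_sum[unfolded dyad_sum_def] sum_sq_dyad_sum_entries)
  then show ?thesis
    by (simp add: gram_det4_def power2_eq_square algebra_simps)
qed

section \<open>Three-qubit pure states\<close>

definition amp :: "complex vec \<Rightarrow> nat \<Rightarrow> nat \<Rightarrow> nat \<Rightarrow> complex" where
  "amp psi a b c = psi $ (4 * a + 2 * b + c)"

definition amp_norm :: "(nat \<Rightarrow> nat \<Rightarrow> nat \<Rightarrow> complex) \<Rightarrow> real" where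
  "amp_norm z = (\<Sum>a<2. \<Sum>b<2. \<Sum>c<2. (cmod (z a b c))\<^sup>2)"

definition slice_A :: "(nat \<Rightarrow> nat \<Rightarrow> nat \<Rightarrow> complex) \<Rightarrow> nat \<Rightarrow> nat \<Rightarrow> complex" where
  "slice_A z a = (\<lambda>i. z a (i div 2) (i mod 2))"

definition slice_B :: "(nat \<Rightarrow> nat \<Rightarrow> nat \<Rightarrow> complex) \<Rightarrow> nat \<Rightarrow> nat \<Rightarrow> complex" where
  "slice_B z b = (\<lambda>i. z (i div 2) b (i mod 2))"

definition slice_C :: "(nat \<Rightarrow> nat \<Rightarrow> nat \<Rightarrow> complex) \<Rightarrow> nat \<Rightarrow> nat \<Rightarrow> complex" where
  "slice_C z c = (\<lambda>i. z (i div 2) (i mod 2) c)"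

definition red_AB :: "(nat \<Rightarrow> nat \<Rightarrow> nat \<Rightarrow> complex) \<Rightarrow> complex mat" where
  "red_AB z = dyad_sum (slice_C z 0) (slice_C z 1)"

definition red_AC :: "(nat \<Rightarrow> nat \<Rightarrow> nat \<Rightarrow> complex) \<Rightarrow> complex mat" where
  "red_AC z = dyad_sum (slice_B z 0) (slice_B z 1)"

definition red_BC :: "(nat \<Rightarrow> nat \<Rightarrow> nat \<Rightarrow> complex) \<Rightarrow> complex mat" where
  "red_BC z = dyad_sum (slice_A z 0) (slice_A z 1)"

lemmas slice_defs = slice_A_def slice_B_def slice_C_def

lemma flip_form_slices_minors:
  fixes z :: "nat \<Rightarrow> nat \<Rightarrow> nat \<Rightarrow> complex"
  defines "m \<equiv> minor2 (slice_A z 0) (slice_A z 1)"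
  shows "flip_form (slice_B z 0) (slice_B z 0) = - 2 * m 0 1"
    and "flip_form (slice_B z 0) (slice_B z 1) = m 1 2 - m 0 3"
    and "flip_form (slice_B z 1) (slice_B z 1) = - 2 * m 2 3"
    and "flip_form (slice_C z 0) (slice_C z 0) = - 2 * m 0 2"
    and "flip_form (slice_C z 0) (slice_C z 1) = - m 0 3 - m 1 2"
    and "flip_form (slice_C z 1) (slice_C z 1) = - 2 * m 1 3"
  unfolding m_def minor2_def flip_form_def slice_defs by (simp_all add: algebra_simps)

lemma reduced_states_amp:
  assumes "dim_vec psi = 8"
  shows "rhoAB psi = red_AB (amp psi)" and "rhoAC psi = red_AC (amp psi)" and "rhoBC psi = red_BC (amp psi)"
proof -
  have lt4: "i < 4 \<Longrightarrow> i \<in> {0,1,2,3}" for i :: nat by auto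
  show "rhoAB psi = red_AB (amp psi)"
    unfolding rhoAB_def red_AB_def ptrace_C_def density_def dyad_sum_def amp_def slice_defs
    by (rule eq_matI) (use assms in \<open>auto dest!: lt4 simp: sum_lessThan_2\<close>)
  show "rhoAC psi = red_AC (amp psi)"
    unfolding rhoAC_def red_AC_def ptrace_B_def density_def dyad_sum_def amp_def slice_defs
    by (rule eq_matI) (use assms in \<open>auto dest!: lt4 simp: sum_lessThan_2\<close>)
  show "rhoBC psi = red_BC (amp psi)"
    unfolding rhoBC_def red_BC_def ptrace_A_def density_def dyad_sum_def amp_def slice_defs
    by (rule eq_matI) (use assms in \<open>auto dest!: lt4 simp: sum_lessThan_2\<close>)
qed

lemma amp_norm_amp: "amp_norm (amp psi) = (\<Sum>k<8. (cmod (psi $ k))\<^sup>2)"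
proof -
  have "{..<8::nat} = {0,1,2,3,4,5,6,7}" by auto
  then show ?thesis
    by (simp add: amp_norm_def amp_def sum_lessThan_2 numeral_2_eq_2[symmetric] numeral_3_eq_3[symmetric])
qed

lemma amp_norm_slices:
  shows "amp_norm z = sq_norm4 (slice_A z 0) + sq_norm4 (slice_A z 1)"
    and "amp_norm z = sq_norm4 (slice_B z 0) + sq_norm4 (slice_B z 1)"
    and "amp_norm z = sq_norm4 (slice_C z 0) + sq_norm4 (slice_C z 1)"
  by (simp_all add: amp_norm_def sq_norm4_def slice_defs sum_lessThan_2 sum_lessThan_4)

text \<open>Up to sign, the common value is Cayley's hyperdeterminant of \<open>z\<close>; its modulus is a quarter
  of the three-tangle.\<close>
lemma flip_det_slices:
  shows "flip_det (slice_B z 0) (slice_B z 1) = flip_det (slice_A z 0) (slice_A z 1)"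
    and "flip_det (slice_C z 0) (slice_C z 1) = flip_det (slice_A z 0) (slice_A z 1)"
proof -
  define m where "m = minor2 (slice_A z 0) (slice_A z 1)"
  have A: "flip_det (slice_A z 0) (slice_A z 1) = 4 * m 0 2 * m 1 3 - (m 0 3 + m 1 2)\<^sup>2"
    unfolding m_def by (rule flip_det_eq_minors)
  have "flip_det (slice_B z 0) (slice_B z 1) = 4 * m 0 1 * m 2 3 - (m 1 2 - m 0 3)\<^sup>2"
    unfolding flip_det_def flip_form_slices_minors m_def[symmetric] by (simp add: power2_eq_square)
  also have "\<dots> = 4 * (m 0 1 * m 2 3 - m 0 2 * m 1 3 + m 0 3 * m 1 2) + (4 * m 0 2 * m 1 3 - (m 0 3 + m 1 2)\<^sup>2)"
    by (simp add: algebra_simps power2_eq_square)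
  finally show "flip_det (slice_B z 0) (slice_B z 1) = flip_det (slice_A z 0) (slice_A z 1)"
    unfolding A m_def minor2_pluecker by simp
  have "flip_det (slice_C z 0) (slice_C z 1) = 4 * m 0 2 * m 1 3 - (m 0 3 + m 1 2)\<^sup>2"
    unfolding flip_det_def flip_form_slices_minors m_def[symmetric] by (simp add: algebra_simps power2_eq_square)
  with A show "flip_det (slice_C z 0) (slice_C z 1) = flip_det (slice_A z 0) (slice_A z 1)"
    by simp
qed

lemma flip_norm_slices_B_C:
  "flip_norm (slice_B z 0) (slice_B z 1) + flip_norm (slice_C z 0) (slice_C z 1) =
     4 * gram_det4 (slice_A z 0) (slice_A z 1)"
proof -
  define m where "m = minor2 (slice_A z 0) (slice_A z 1)"
  have "- m 0 3 - m 1 2 = - (m 1 2 + m 0 3)" by simp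
  then have "(cmod (m 1 2 - m 0 3))\<^sup>2 + (cmod (- m 0 3 - m 1 2))\<^sup>2 = 2 * ((cmod (m 1 2))\<^sup>2 + (cmod (m 0 3))\<^sup>2)"
    by (simp only: norm_minus_cancel cmod_parallelogram)
  then show ?thesis
    unfolding flip_norm_def flip_form_slices_minors gram_det4_eq_sum_minors m_def[symmetric]
    by (simp add: norm_mult power_mult_distrib)
qed

lemma flip_norm_slice_transpose:
  "flip_norm (\<lambda>i. u (i mod 2) (i div 2)) (\<lambda>i. v (i mod 2) (i div 2)) =
     flip_norm (\<lambda>i. u (i div 2) (i mod 2)) (\<lambda>i. v (i div 2) (i mod 2))"
  by (simp add: flip_norm_def flip_form_def algebra_simps)

text \<open>Coffman-Kundu-Wootters: \<open>4 det \<rho>\<^sub>X = tr (\<rho>\<^sub>X\<^sub>Y \<rho>\<^sub>X\<^sub>Y\<^sup>~) + tr (\<rho>\<^sub>X\<^sub>Z \<rho>\<^sub>X\<^sub>Z\<^sup>~)\<close>;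
  the cases \<open>X = B, C\<close> follow from \<open>X = A\<close> by permuting the qubits.\<close>
lemma gram_det_slices:
  shows "4 * gram_det4 (slice_A z 0) (slice_A z 1) =
      flip_norm (slice_B z 0) (slice_B z 1) + flip_norm (slice_C z 0) (slice_C z 1)"
    and "4 * gram_det4 (slice_B z 0) (slice_B z 1) =
      flip_norm (slice_A z 0) (slice_A z 1) + flip_norm (slice_C z 0) (slice_C z 1)"
    and "4 * gram_det4 (slice_C z 0) (slice_C z 1) =
      flip_norm (slice_A z 0) (slice_A z 1) + flip_norm (slice_B z 0) (slice_B z 1)"
proof -
  show "4 * gram_det4 (slice_A z 0) (slice_A z 1) =
      flip_norm (slice_B z 0) (slice_B z 1) + flip_norm (slice_C z 0) (slice_C z 1)"
    using flip_norm_slices_B_C[of z] by linarith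
  show "4 * gram_det4 (slice_B z 0) (slice_B z 1) =
      flip_norm (slice_A z 0) (slice_A z 1) + flip_norm (slice_C z 0) (slice_C z 1)"
    using flip_norm_slices_B_C[of "\<lambda>a b c. z b a c"]
      flip_norm_slice_transpose[of "\<lambda>p q. z p q 0" "\<lambda>p q. z p q 1"]
    by (simp add: slice_defs)
  show "4 * gram_det4 (slice_C z 0) (slice_C z 1) =
      flip_norm (slice_A z 0) (slice_A z 1) + flip_norm (slice_B z 0) (slice_B z 1)"
    using flip_norm_slices_B_C[of "\<lambda>a b c. z b c a"]
      flip_norm_slice_transpose[of "z 0" "z 1"]
      flip_norm_slice_transpose[of "\<lambda>p q. z p 0 q" "\<lambda>p q. z p 1 q"]
    by (simp add: slice_defs)
qed

lemma concurrence_sq_reduced: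
  fixes z :: "nat \<Rightarrow> nat \<Rightarrow> nat \<Rightarrow> complex"
  defines "D \<equiv> cmod (flip_det (slice_A z 0) (slice_A z 1))"
  shows "(concurrence (red_AB z))\<^sup>2 = flip_norm (slice_C z 0) (slice_C z 1) - 2 * D"
    and "(concurrence (red_AC z))\<^sup>2 = flip_norm (slice_B z 0) (slice_B z 1) - 2 * D"
    and "(concurrence (red_BC z))\<^sup>2 = flip_norm (slice_A z 0) (slice_A z 1) - 2 * D"
  unfolding red_AB_def red_AC_def red_BC_def concurrence_sq_dyad_sum D_def flip_det_slices by simp_all

lemma S_corr_reduced:
  fixes z :: "nat \<Rightarrow> nat \<Rightarrow> nat \<Rightarrow> complex"
  defines "C_AB \<equiv> (concurrence (red_AB z))\<^sup>2" and "C_AC \<equiv> (concurrence (red_AC z))\<^sup>2"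
    and "C_BC \<equiv> (concurrence (red_BC z))\<^sup>2"
  shows "S_corr (red_AB z) = (amp_norm z)\<^sup>2 + 2 * C_AB - C_AC - C_BC"
    and "S_corr (red_AC z) = (amp_norm z)\<^sup>2 + 2 * C_AC - C_AB - C_BC"
    and "S_corr (red_BC z) = (amp_norm z)\<^sup>2 + 2 * C_BC - C_AB - C_AC"
  using gram_det_slices[of z] amp_norm_slices[of z]
  unfolding C_AB_def C_AC_def C_BC_def concurrence_sq_reduced
  by (simp_all add: red_AB_def red_AC_def red_BC_def S_corr_dyad_sum)

lemma concurrence_sq_sum_le:
  "(concurrence (red_AB z))\<^sup>2 + (concurrence (red_AC z))\<^sup>2 + (concurrence (red_BC z))\<^sup>2
     \<le> 4/3 * (amp_norm z)\<^sup>2"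
  using flip_gram_bound[of "slice_A z 0" "slice_A z 1"] gram_det_slices(1)[of z]
  unfolding concurrence_sq_reduced amp_norm_slices(1)[of z] by simp

theorem theorem6:
  fixes psi :: "complex vec"
  assumes "is_pure_3qubit psi"
  shows "S_max_total psi + 3 * E_W psi \<le> 10 / 3"
proof -
  have dim: "dim_vec psi = 8" and norm: "amp_norm (amp psi) = 1"
    using assms by (simp_all add: is_pure_3qubit_def amp_norm_amp)
  define C_AB C_AC C_BC where "C_AB = (concurrence (rhoAB psi))\<^sup>2"
    and "C_AC = (concurrence (rhoAC psi))\<^sup>2" and "C_BC = (concurrence (rhoBC psi))\<^sup>2"
  have S: "S_corr (rhoAB psi) = 1 + 2 * C_AB - C_AC - C_BC"
      "S_corr (rhoAC psi) = 1 + 2 * C_AC - C_AB - C_BC"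
      "S_corr (rhoBC psi) = 1 + 2 * C_BC - C_AB - C_AC"
    using S_corr_reduced[of "amp psi"] norm
    unfolding C_AB_def C_AC_def C_BC_def reduced_states_amp[OF dim] by simp_all
  have "C_AB + C_AC + C_BC \<le> 4/3"
    using concurrence_sq_sum_le[of "amp psi"] norm
    unfolding C_AB_def C_AC_def C_BC_def reduced_states_amp[OF dim] by simp
  moreover have "E_W psi = min C_AB (min C_AC C_BC)"
    by (simp add: E_W_def C_AB_def C_AC_def C_BC_def)
  ultimately show ?thesis
    unfolding S_max_total_def Let_def S by (simp add: max_def min_def)
qed

end
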